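(* Let $F=\{T_1,\dots,T_t\}$ be a random forest with $t\ge 1$ and, for an input $x\in\mathcal{D}$, let $L_x$ be the labelling of the explanation BAG $\mathcal{B}_F$ defined by: a feature argument $A_{X_i\in S_{i,j}}$ is $\mathrm{in}$ if $x_i\in S_{i,j}$ and $\mathrm{out}$ otherwise; a rule argument $A_{T,r}$ is $\mathrm{in}$ if $r$ is the active rule in $T$ for $x$ and $\mathrm{out}$ otherwise; a class argument is $\mathrm{in}$ if its supporters dominate its attackers, $\mathrm{out}$ if its attackers dominate its supporters, and $\mathrm{und}$ otherwise. Then (1) for every $x\in\mathcal{D}$, $L_x$ is a bi-complete labelling of $\mathcal{B}_F$; (2) there is at most one $y\in\mathcal{C}$ with $L_x(A_y)=\mathrm{in}$, and if $L_x(A_y)=\mathrm{in}$ for some $y\in\mathcal{C}$, then $L_x(A_{y'})=\mathrm{out}$ for all $y'\in\mathcal{C}\setminus\{y\}$.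
   Context: Features $X_1,\dots,X_k$ have domains $D_1,\dots,D_k$; each feature is categorical (finite domain) or numerical ($D_i\subseteq\mathbb{R}$). Inputs are $x=(x_1,\dots,x_k)\in\mathcal{D}=D_1\times\dots\times D_k$; $\mathcal{C}$ is a finite set of class labels. Feature conditions are $X_i=v$ (categorical) or $X_i\le v$ (numerical); a feature literal is a condition or its negation. A rule $r$ is $\mathrm{prem}(r)\rightarrow\mathrm{conc}(r)$ with $\mathrm{prem}(r)$ a finite set of feature literals and $\mathrm{conc}(r)\in\mathcal{C}$. A decision tree $T$ is a finite set of rules such that every input satisfies the premise of exactly one rule of $T$, the active rule in $T$ for $x$. A random forest is a finite set of decision trees. Domain partition: for a categorical feature, the singletons $\{v\}$, $v\in D_i$; for a numerical feature with distinct thresholds $v_1<\dots<v_m$ occurring in conditions $X_i\le v$ in $F$, the sets $D_i\cap(-\infty,v_1]$, $D_i\cap(v_{j-1},v_j]$ ($2\le j\le m$), $D_i\cap(v_m,\infty)$; denote them $S_{i,1},\dots,S_{i,n_i}$. A BAG is $(\mathcal{A},\mathrm{Att},\mathrm{Sup})$ with $\mathcal{A}$ finite and $\mathrm{Att},\mathrm{Sup}\subseteq\mathcal{A}\times\mathcal{A}$; $\mathrm{Att}(A)=\{B:(B,A)\in\mathrm{Att}\}$, $\mathrm{Sup}(A)=\{B:(B,A)\in\mathrm{Sup}\}$. A labelling is a map $L:\mathcal{A}\to\{\mathrm{in},\mathrm{out},\mathrm{und}\}$. The attackers of $A$ dominate its supporters if $|\{B\in\mathrm{Att}(A):L(B)=\mathrm{in}\}|>|\{B\in\mathrm{Sup}(A):L(B)\ne\mathrm{out}\}|$;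 the supporters dominate the attackers if $|\{B\in\mathrm{Sup}(A):L(B)=\mathrm{in}\}|>|\{B\in\mathrm{Att}(A):L(B)\ne\mathrm{out}\}|$. $L$ is bi-complete if for every $A$: $L(A)=\mathrm{in}$ iff ($L(B)=\mathrm{out}$ for all $B\in\mathrm{Att}(A)$ or $A$'s supporters dominate its attackers), and $L(A)=\mathrm{out}$ iff $A$'s attackers dominate its supporters. The explanation BAG $\mathcal{B}_F$ has arguments: a class argument $A_y$ for each $y\in\mathcal{C}$; a rule argument $A_{T,r}$ for each $T\in F$, $r\in T$; a feature argument $A_{X_i\in S_{i,j}}$ for each feature $i$ and partition set $S_{i,j}$. Attacks: between any two distinct feature arguments of the same feature; from $A_{X_i\in S_{i,j}}$ to $A_{T,r}$ whenever some literal in $\mathrm{prem}(r)$ is satisfied by no value in $S_{i,j}$; from $A_{T,r}$ to $A_y$ whenever $\mathrm{conc}(r)\ne y$. Supports: from $A_{T,r}$ to $A_y$ whenever $\mathrm{conc}(r)=y$. No other attacks or supports. *)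

theory Defs
  imports Main
begin

datatype lab = In | Out | Und

text \<open>A BAG is a triple (arguments, attack relation, support relation).\<close>
type_synonym 'a bag = "'a set \<times> ('a \<times> 'a) set \<times> ('a \<times> 'a) set"

definition rel_of :: "('a \<times> 'a) set \<Rightarrow> 'a \<Rightarrow> 'a set" where
  "rel_of R A = {B. (B, A) \<in> R}"

definition att_dom :: "('a \<times> 'a) set \<Rightarrow> ('a \<times> 'a) set \<Rightarrow> ('a \<Rightarrow> lab) \<Rightarrow> 'a \<Rightarrow> bool" where
  "att_dom At Sp L A \<longleftrightarrow>
     card {B \<in> rel_of At A. L B = In} > card {B \<in> rel_of Sp A. L B \<noteq> Out}"

definition sup_dom :: "('a \<times> 'a) set \<Rightarrow> ('a \<times> 'a) set \<Rightarrow> ('a \<Rightarrow> lab) \<Rightarrow> 'a \<Rightarrow> bool" where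
  "sup_dom At Sp L A \<longleftrightarrow>
     card {B \<in> rel_of Sp A. L B = In} > card {B \<in> rel_of At A. L B \<noteq> Out}"

definition bi_complete :: "'a bag \<Rightarrow> ('a \<Rightarrow> lab) \<Rightarrow> bool" where
  "bi_complete G L \<longleftrightarrow> (case G of (Args, At, Sp) \<Rightarrow>
     (\<forall>A \<in> Args.
        (L A = In \<longleftrightarrow> ((\<forall>B \<in> rel_of At A. L B = Out) \<or> sup_dom At Sp L A)) \<and>
        (L A = Out \<longleftrightarrow> att_dom At Sp L A)))"

text \<open>Feature values live in a common
  linearly ordered type \<open>'v\<close> (e.g. real). \<open>numf i\<close> says feature i is numerical,
  otherwise it is categorical; \<open>D i\<close> is its domain.\<close>

datatype 'v cond = CEq nat 'v | CLe nat 'v   \<comment> \<open>\<open>X_i = v\<close> and \<open>X_i \<le> v\<close>\<close>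

datatype 'v lit = Pos "'v cond" | Neg "'v cond"

fun cond_feat :: "'v cond \<Rightarrow> nat" where
  "cond_feat (CEq i _) = i" | "cond_feat (CLe i _) = i"

fun cond_holds :: "'v::linorder cond \<Rightarrow> 'v \<Rightarrow> bool" where
  "cond_holds (CEq _ w) v \<longleftrightarrow> v = w" | "cond_holds (CLe _ w) v \<longleftrightarrow> v \<le> w"

fun lit_cond :: "'v lit \<Rightarrow> 'v cond" where
  "lit_cond (Pos c) = c" | "lit_cond (Neg c) = c"

definition lit_feat :: "'v lit \<Rightarrow> nat" where
  "lit_feat l = cond_feat (lit_cond l)"

fun lit_holds :: "'v::linorder lit \<Rightarrow> 'v \<Rightarrow> bool" where
  "lit_holds (Pos c) v \<longleftrightarrow> cond_holds c v" | "lit_holds (Neg c) v \<longleftrightarrow> \<not> cond_holds c v"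

definition wf_lit :: "nat \<Rightarrow> (nat \<Rightarrow> bool) \<Rightarrow> 'v lit \<Rightarrow> bool" where
  "wf_lit k numf l \<longleftrightarrow> lit_feat l < k \<and>
     (case lit_cond l of CEq i _ \<Rightarrow> \<not> numf i | CLe i _ \<Rightarrow> numf i)"

definition input_dom :: "nat \<Rightarrow> (nat \<Rightarrow> 'v set) \<Rightarrow> (nat \<Rightarrow> 'v) \<Rightarrow> bool" where
  "input_dom k D x \<longleftrightarrow> (\<forall>i<k. x i \<in> D i)"

definition sat_lit :: "(nat \<Rightarrow> 'v::linorder) \<Rightarrow> 'v lit \<Rightarrow> bool" where
  "sat_lit x l \<longleftrightarrow> lit_holds l (x (lit_feat l))"

type_synonym ('v, 'c) rule = "'v lit set \<times> 'c"

definition prem :: "('v, 'c) rule \<Rightarrow> 'v lit set" where "prem r = fst r"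
definition conc :: "('v, 'c) rule \<Rightarrow> 'c" where "conc r = snd r"

definition sat_prem :: "(nat \<Rightarrow> 'v::linorder) \<Rightarrow> ('v, 'c) rule \<Rightarrow> bool" where
  "sat_prem x r \<longleftrightarrow> (\<forall>l \<in> prem r. sat_lit x l)"

type_synonym ('v, 'c) tree = "('v, 'c) rule set"

definition is_tree :: "nat \<Rightarrow> (nat \<Rightarrow> 'v set) \<Rightarrow> ('v::linorder, 'c) tree \<Rightarrow> bool" where
  "is_tree k D T \<longleftrightarrow> finite T \<and> (\<forall>r \<in> T. finite (prem r)) \<and>
     (\<forall>x. input_dom k D x \<longrightarrow> (\<exists>!r. r \<in> T \<and> sat_prem x r))"

definition active_rule :: "('v::linorder, 'c) tree \<Rightarrow> (nat \<Rightarrow> 'v) \<Rightarrow> ('v, 'c) rule \<Rightarrow> bool" where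
  "active_rule T x r \<longleftrightarrow> r \<in> T \<and> sat_prem x r"

definition thresholds :: "('v, 'c) tree set \<Rightarrow> nat \<Rightarrow> 'v set" where
  "thresholds F i = {v. \<exists>T \<in> F. \<exists>r \<in> T. \<exists>l \<in> prem r. lit_cond l = CLe i v}"

definition part_count :: "(nat \<Rightarrow> bool) \<Rightarrow> (nat \<Rightarrow> 'v::linorder set) \<Rightarrow> ('v, 'c) tree set \<Rightarrow> nat \<Rightarrow> nat" where
  "part_count numf D F i =
     (if numf i then length (sorted_list_of_set (thresholds F i)) + 1 else card (D i))"

text \<open>Partition set \<open>S_{i,j}\<close>, indexed from \<open>j = 0\<close> to \<open>n_i - 1\<close>.
  Numerical: with sorted thresholds \<open>ts\<close> of length m, the sets
  \<open>D_i \<inter> (-\<infinity>, ts!0]\<close>, \<open>D_i \<inter> (ts!(j-1), ts!j]\<close>, \<open>D_i \<inter> (ts!(m-1), \<infinity>)\<close>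
  (just \<open>D_i\<close> if m = 0). Categorical: the singletons of the values of \<open>D_i\<close>.\<close>
definition part_set :: "(nat \<Rightarrow> bool) \<Rightarrow> (nat \<Rightarrow> 'v::linorder set) \<Rightarrow> ('v, 'c) tree set \<Rightarrow> nat \<Rightarrow> nat \<Rightarrow> 'v set" where
  "part_set numf D F i j =
     (if numf i then
        (let ts = sorted_list_of_set (thresholds F i); m = length ts in
          {v \<in> D i. (j = 0 \<or> ts ! (j - 1) < v) \<and> (j = m \<or> v \<le> ts ! j)})
      else {sorted_list_of_set (D i) ! j})"

datatype ('v, 'c) arg =
    AClass 'c
  | ARule "('v, 'c) tree" "('v, 'c) rule"
  | AFeat nat nat   \<comment> \<open>\<open>AFeat i j\<close> is the argument \<open>X_i \<in> S_{i,j}\<close>\<close>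

definition expl_args :: "nat \<Rightarrow> (nat \<Rightarrow> bool) \<Rightarrow> (nat \<Rightarrow> 'v::linorder set) \<Rightarrow> 'c set \<Rightarrow> ('v, 'c) tree set \<Rightarrow> ('v, 'c) arg set" where
  "expl_args k numf D C F =
     {AClass y | y. y \<in> C} \<union>
     {ARule T r | T r. T \<in> F \<and> r \<in> T} \<union>
     {AFeat i j | i j. i < k \<and> j < part_count numf D F i}"

definition expl_att :: "nat \<Rightarrow> (nat \<Rightarrow> bool) \<Rightarrow> (nat \<Rightarrow> 'v::linorder set) \<Rightarrow> 'c set \<Rightarrow> ('v, 'c) tree set \<Rightarrow> (('v, 'c) arg \<times> ('v, 'c) arg) set" where
  "expl_att k numf D C F =
     {(AFeat i j, AFeat i j') | i j j'. i < k \<and> j < part_count numf D F i \<and>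
         j' < part_count numf D F i \<and> j \<noteq> j'} \<union>
     {(AFeat i j, ARule T r) | i j T r. i < k \<and> j < part_count numf D F i \<and> T \<in> F \<and> r \<in> T \<and>
         (\<exists>l \<in> prem r. lit_feat l = i \<and> (\<forall>v \<in> part_set numf D F i j. \<not> lit_holds l v))} \<union>
     {(ARule T r, AClass y) | T r y. T \<in> F \<and> r \<in> T \<and> y \<in> C \<and> conc r \<noteq> y}"

definition expl_sup :: "'c set \<Rightarrow> ('v, 'c) tree set \<Rightarrow> (('v, 'c) arg \<times> ('v, 'c) arg) set" where
  "expl_sup C F = {(ARule T r, AClass y) | T r y. T \<in> F \<and> r \<in> T \<and> y \<in> C \<and> conc r = y}"

definition expl_bag :: "nat \<Rightarrow> (nat \<Rightarrow> bool) \<Rightarrow> (nat \<Rightarrow> 'v::linorder set) \<Rightarrow> 'c set \<Rightarrow> ('v, 'c) tree set \<Rightarrow> ('v, 'c) arg bag" where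
  "expl_bag k numf D C F = (expl_args k numf D C F, expl_att k numf D C F, expl_sup C F)"

definition lab_base :: "(nat \<Rightarrow> bool) \<Rightarrow> (nat \<Rightarrow> 'v::linorder set) \<Rightarrow> ('v, 'c) tree set \<Rightarrow> (nat \<Rightarrow> 'v) \<Rightarrow> ('v, 'c) arg \<Rightarrow> lab" where
  "lab_base numf D F x A = (case A of
       AFeat i j \<Rightarrow> (if x i \<in> part_set numf D F i j then In else Out)
     | ARule T r \<Rightarrow> (if active_rule T x r then In else Out)
     | AClass y \<Rightarrow> Und)"

text \<open>Class arguments are only attacked/supported by rule arguments, so their
  dominance is evaluated w.r.t. the labels of the rule arguments.\<close>
definition expl_lab :: "nat \<Rightarrow> (nat \<Rightarrow> bool) \<Rightarrow> (nat \<Rightarrow> 'v::linorder set) \<Rightarrow> 'c set \<Rightarrow> ('v, 'c) tree set \<Rightarrow> (nat \<Rightarrow> 'v) \<Rightarrow> ('v, 'c) arg \<Rightarrow> lab" where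
  "expl_lab k numf D C F x A = (case A of
       AClass y \<Rightarrow>
         (if sup_dom (expl_att k numf D C F) (expl_sup C F) (lab_base numf D F x) A then In
          else if att_dom (expl_att k numf D C F) (expl_sup C F) (lab_base numf D F x) A then Out
          else Und)
     | _ \<Rightarrow> lab_base numf D F x A)"

end

theory Submission
  imports Defs
begin

text \<open>
  The input x lies in exactly one part of each feature, and parts of the same feature attack
  each other, so the In feature arguments are those containing x and every other one has an In
  attacker. A well-formed literal is constant on every part, hence a rule fails at x iff one of
  its literals fails on the whole part containing x, i.e. iff the rule has an In attacker.
  Unsupported arguments whose attackers are two-valued are labelled bi-completely in exactly
  this way. For a class y, the In supporters and attackers are the active rules voting for and
  against y. Each tree has one active rule, so a class without In attackers gets all \<open>|F| \<ge> 1\<close>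
  votes; and a class winning a strict majority leaves every other class strictly outvoted.
\<close>

definition segment :: "'v::linorder list \<Rightarrow> nat \<Rightarrow> 'v \<Rightarrow> bool" where
  "segment ts j v \<longleftrightarrow> (j = 0 \<or> ts ! (j - 1) < v) \<and> (j = length ts \<or> v \<le> ts ! j)"

lemma segment_exists: "\<exists>j \<le> length ts. segment ts j v"
proof -
  define j where "j = (LEAST j. j = length ts \<or> v \<le> ts ! j)"
  have upper: "j = length ts \<or> v \<le> ts ! j"
    unfolding j_def by (rule LeastI[of _ "length ts"]) simp
  have "j \<le> length ts"
    unfolding j_def by (rule Least_le) simp
  moreover have "j = 0 \<or> ts ! (j - 1) < v"
  proof (cases "j = 0")
    case False
    then have "j - 1 < j" by simp
    then have "\<not> (j - 1 = length ts \<or> v \<le> ts ! (j - 1))"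
      unfolding j_def by (rule not_less_Least)
    then show ?thesis by auto
  qed simp
  ultimately show ?thesis using upper unfolding segment_def by blast
qed

lemma segment_unique:
  assumes "sorted ts" "segment ts j v" "segment ts j' v" "j \<le> length ts" "j' \<le> length ts"
  shows "j = j'"
proof -
  have "\<not> i < i'" if "segment ts i v" "segment ts i' v" "i' \<le> length ts" for i i'
  proof
    assume "i < i'"
    then have "ts ! i \<le> ts ! (i' - 1)"
      using assms(1) that(3) by (intro sorted_nth_mono) auto
    with \<open>i < i'\<close> that show False unfolding segment_def by auto
  qed
  then show ?thesis using assms(2-5) by (meson linorder_neqE_nat)
qed

lemma segment_le_iff:
  assumes "sorted ts" "segment ts j a" "segment ts j b" "j \<le> length ts" "t \<in> set ts"
  shows "a \<le> t \<longleftrightarrow> b \<le> t"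
proof -
  obtain p where p: "p < length ts" "t = ts ! p"
    using assms(5) by (auto simp: in_set_conv_nth)
  show ?thesis
  proof (cases "p < j")
    case True
    then have "ts ! p \<le> ts ! (j - 1)" "ts ! (j - 1) < a" "ts ! (j - 1) < b"
      using assms p unfolding segment_def by (auto intro: sorted_nth_mono)
    then show ?thesis using p by auto
  next
    case False
    then have "ts ! j \<le> ts ! p" "a \<le> ts ! j" "b \<le> ts ! j"
      using assms p unfolding segment_def by (auto intro: sorted_nth_mono)
    then show ?thesis using p by auto
  qed
qed

lemma finite_thresholds:
  assumes "finite F" "\<forall>T \<in> F. finite T \<and> (\<forall>r \<in> T. finite (prem r))"
  shows "finite (thresholds F i)"
proof -
  let ?bound = "\<lambda>l. case lit_cond l of CEq _ v \<Rightarrow> v | CLe _ v \<Rightarrow> v"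
  have "thresholds F i \<subseteq> ?bound ` (\<Union>T \<in> F. \<Union>r \<in> T. prem r)"
    unfolding thresholds_def by force
  moreover have "finite (\<Union>T \<in> F. \<Union>r \<in> T. prem r)"
    using assms by auto
  ultimately show ?thesis by (rule finite_surj[rotated])
qed

lemma part_set_numerical:
  "numf i \<Longrightarrow> part_set numf D F i j = {v \<in> D i. segment (sorted_list_of_set (thresholds F i)) j v}"
  unfolding part_set_def segment_def Let_def by simp

lemma ex1_part_set:
  assumes "\<not> numf i \<Longrightarrow> finite (D i)" "finite (thresholds F i)" "v \<in> D i"
  shows "\<exists>!j. j < part_count numf D F i \<and> v \<in> part_set numf D F i j"
proof (cases "numf i")
  case True
  let ?ts = "sorted_list_of_set (thresholds F i)"
  obtain j where j: "j \<le> length ?ts" "segment ?ts j v"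
    using segment_exists by blast
  show ?thesis
  proof (rule ex1I[of _ j])
    show "j < part_count numf D F i \<and> v \<in> part_set numf D F i j"
      using True j assms(3) by (auto simp: part_count_def part_set_numerical)
  next
    fix j' assume "j' < part_count numf D F i \<and> v \<in> part_set numf D F i j'"
    then show "j' = j"
      using True j by (intro segment_unique[of ?ts j' v j])
        (auto simp: part_count_def part_set_numerical)
  qed
next
  case False
  let ?vs = "sorted_list_of_set (D i)"
  have "distinct ?vs" "v \<in> set ?vs" using False assms by auto
  from distinct_Ex1[OF this] show ?thesis
    using False assms by (simp add: part_count_def part_set_def eq_commute[of v])
qed

lemma lit_holds_part_set_eq:
  assumes "wf_lit k numf l" "lit_feat l = i"
    and "\<And>w. lit_cond l = CLe i w \<Longrightarrow> w \<in> thresholds F i"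
    and "finite (thresholds F i)" "j < part_count numf D F i"
    and "a \<in> part_set numf D F i j" "b \<in> part_set numf D F i j"
  shows "lit_holds l a \<longleftrightarrow> lit_holds l b"
proof (cases "lit_cond l")
  case (CEq i' w)
  then have "\<not> numf i" using assms(1,2) by (auto simp: wf_lit_def lit_feat_def)
  then have "a = b" using assms(6,7) by (simp add: part_set_def)
  then show ?thesis by simp
next
  case (CLe i' w)
  then have "i' = i" "numf i" using assms(1,2) by (auto simp: wf_lit_def lit_feat_def)
  let ?ts = "sorted_list_of_set (thresholds F i)"
  have "a \<le> w \<longleftrightarrow> b \<le> w"
  proof (rule segment_le_iff)
    show "segment ?ts j a" "segment ?ts j b"
      using assms(6,7) \<open>numf i\<close> by (auto simp: part_set_numerical)
    show "j \<le> length ?ts" using assms(5) \<open>numf i\<close> by (simp add: part_count_def)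
    show "w \<in> set ?ts" using assms(3,4) CLe \<open>i' = i\<close> by simp
  qed simp
  then show ?thesis using CLe by (cases l) auto
qed

definition bi_complete_at ::
    "('a \<times> 'a) set \<Rightarrow> ('a \<times> 'a) set \<Rightarrow> ('a \<Rightarrow> lab) \<Rightarrow> 'a \<Rightarrow> bool" where
  "bi_complete_at At Sp L A \<longleftrightarrow>
     (L A = In \<longleftrightarrow> (\<forall>B \<in> rel_of At A. L B = Out) \<or> sup_dom At Sp L A) \<and>
     (L A = Out \<longleftrightarrow> att_dom At Sp L A)"

lemma bi_complete_iff_bi_complete_at:
  "bi_complete (Args, At, Sp) L \<longleftrightarrow> (\<forall>A \<in> Args. bi_complete_at At Sp L A)"
  by (simp add: bi_complete_def bi_complete_at_def)

lemma dominance_cong: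
  assumes "\<And>B. B \<in> rel_of At A \<union> rel_of Sp A \<Longrightarrow> L B = L' B"
  shows "sup_dom At Sp L A \<longleftrightarrow> sup_dom At Sp L' A" "att_dom At Sp L A \<longleftrightarrow> att_dom At Sp L' A"
proof -
  have "{B \<in> rel_of R A. L B = v} = {B \<in> rel_of R A. L' B = v}"
    "{B \<in> rel_of R A. L B \<noteq> v} = {B \<in> rel_of R A. L' B \<noteq> v}"
    if "R = At \<or> R = Sp" for R v
    using assms that by auto
  then show "sup_dom At Sp L A \<longleftrightarrow> sup_dom At Sp L' A" "att_dom At Sp L A \<longleftrightarrow> att_dom At Sp L' A"
    unfolding sup_dom_def att_dom_def by simp_all
qed

lemma bi_complete_at_unsupported:
  assumes "rel_of Sp A = {}" "finite (rel_of At A)" "\<forall>B \<in> rel_of At A. L B \<noteq> Und"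
    and "L A = (if \<exists>B \<in> rel_of At A. L B = In then Out else In)"
  shows "bi_complete_at At Sp L A"
proof -
  have "\<not> sup_dom At Sp L A" using assms(1) by (simp add: sup_dom_def)
  moreover have "att_dom At Sp L A \<longleftrightarrow> (\<exists>B \<in> rel_of At A. L B = In)"
    using assms(1,2) by (auto simp: att_dom_def card_gt_0_iff)
  moreover have "L B = Out \<longleftrightarrow> L B \<noteq> In" if "B \<in> rel_of At A" for B
    using assms(3) that by (cases "L B") auto
  ultimately show ?thesis using assms(4) by (auto simp: bi_complete_at_def)
qed

lemma bi_complete_at_by_dominance:
  assumes "\<forall>B \<in> rel_of At A \<union> rel_of Sp A. L B \<noteq> Und"
    and "L A = (if sup_dom At Sp L A then In else if att_dom At Sp L A then Out else Und)"
    and "(\<forall>B \<in> rel_of At A. L B = Out) \<Longrightarrow> sup_dom At Sp L A"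
  shows "bi_complete_at At Sp L A"
proof -
  have "{B \<in> rel_of R A. L B \<noteq> Out} = {B \<in> rel_of R A. L B = In}" if "R = At \<or> R = Sp" for R
  proof -
    have "L B \<noteq> Out \<longleftrightarrow> L B = In" if "B \<in> rel_of R A" for B
      using assms(1) \<open>R = At \<or> R = Sp\<close> that by (cases "L B") auto
    then show ?thesis by blast
  qed
  then have "\<not> (sup_dom At Sp L A \<and> att_dom At Sp L A)"
    by (simp add: sup_dom_def att_dom_def)
  then show ?thesis using assms(2,3) by (auto simp: bi_complete_at_def)
qed

lemma attackers_AFeat:
  "i < k \<Longrightarrow> j < part_count numf D F i \<Longrightarrow>
    rel_of (expl_att k numf D C F) (AFeat i j) = AFeat i ` ({..<part_count numf D F i} - {j})"
  unfolding rel_of_def expl_att_def by blast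

lemma attackers_ARule:
  "T \<in> F \<Longrightarrow> r \<in> T \<Longrightarrow>
    rel_of (expl_att k numf D C F) (ARule T r) =
      {AFeat i j | i j. i < k \<and> j < part_count numf D F i \<and>
         (\<exists>l \<in> prem r. lit_feat l = i \<and> (\<forall>v \<in> part_set numf D F i j. \<not> lit_holds l v))}"
  unfolding rel_of_def expl_att_def by blast

lemma attackers_AClass:
  "y \<in> C \<Longrightarrow>
    rel_of (expl_att k numf D C F) (AClass y) = {ARule T r | T r. T \<in> F \<and> r \<in> T \<and> conc r \<noteq> y}"
  unfolding rel_of_def expl_att_def by blast

lemma supporters_AClass:
  "y \<in> C \<Longrightarrow>
    rel_of (expl_sup C F) (AClass y) = {ARule T r | T r. T \<in> F \<and> r \<in> T \<and> conc r = y}"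
  unfolding rel_of_def expl_sup_def by blast

lemma supporters_AFeat: "rel_of (expl_sup C F) (AFeat i j) = {}"
  and supporters_ARule: "rel_of (expl_sup C F) (ARule T r) = {}"
  unfolding rel_of_def expl_sup_def by auto

lemma expl_lab_AFeat [simp]:
  "expl_lab k numf D C F x (AFeat i j) = (if x i \<in> part_set numf D F i j then In else Out)"
  and expl_lab_ARule [simp]:
  "expl_lab k numf D C F x (ARule T r) = (if active_rule T x r then In else Out)"
  by (simp_all add: expl_lab_def lab_base_def)

lemma expl_lab_AClass:
  fixes k numf D C F x L defines "L \<equiv> expl_lab k numf D C F x"
  shows "L (AClass y) =
    (if sup_dom (expl_att k numf D C F) (expl_sup C F) L (AClass y) then In
     else if att_dom (expl_att k numf D C F) (expl_sup C F) L (AClass y) then Out else Und)"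
proof -
  have "lab_base numf D F x B = L B"
    if "B \<in> rel_of (expl_att k numf D C F) (AClass y) \<union> rel_of (expl_sup C F) (AClass y)" for B
    using that by (auto simp: L_def rel_of_def expl_att_def expl_sup_def expl_lab_def)
  note same_dominance = dominance_cong[OF this]
  have "L (AClass y) =
    (if sup_dom (expl_att k numf D C F) (expl_sup C F) (lab_base numf D F x) (AClass y) then In
     else if att_dom (expl_att k numf D C F) (expl_sup C F) (lab_base numf D F x) (AClass y) then Out
     else Und)"
    by (simp add: L_def expl_lab_def)
  then show ?thesis by (simp only: same_dominance)
qed

definition active_rule_args ::
    "('v::linorder, 'c) tree set \<Rightarrow> (nat \<Rightarrow> 'v) \<Rightarrow> ('c \<Rightarrow> bool) \<Rightarrow> ('v, 'c) arg set" where
  "active_rule_args F x P = {ARule T r | T r. T \<in> F \<and> active_rule T x r \<and> P (conc r)}"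

lemma dominance_AClass:
  fixes k numf D C F x y
  defines "L \<equiv> expl_lab k numf D C F x"
    and "pro \<equiv> card (active_rule_args F x (\<lambda>c. c = y))"
    and "contra \<equiv> card (active_rule_args F x (\<lambda>c. c \<noteq> y))"
  assumes "y \<in> C"
  shows "sup_dom (expl_att k numf D C F) (expl_sup C F) L (AClass y) \<longleftrightarrow> contra < pro"
    and "att_dom (expl_att k numf D C F) (expl_sup C F) L (AClass y) \<longleftrightarrow> pro < contra"
proof -
  have "{B \<in> rel_of (expl_att k numf D C F) (AClass y). L B = In} = active_rule_args F x (\<lambda>c. c \<noteq> y)"
    "{B \<in> rel_of (expl_att k numf D C F) (AClass y). L B \<noteq> Out} = active_rule_args F x (\<lambda>c. c \<noteq> y)"
    "{B \<in> rel_of (expl_sup C F) (AClass y). L B = In} = active_rule_args F x (\<lambda>c. c = y)"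
    "{B \<in> rel_of (expl_sup C F) (AClass y). L B \<noteq> Out} = active_rule_args F x (\<lambda>c. c = y)"
    by (auto simp: L_def attackers_AClass[OF assms(4)] supporters_AClass[OF assms(4)]
        active_rule_args_def active_rule_def split: if_splits)
  then show "sup_dom (expl_att k numf D C F) (expl_sup C F) L (AClass y) \<longleftrightarrow> contra < pro"
    "att_dom (expl_att k numf D C F) (expl_sup C F) L (AClass y) \<longleftrightarrow> pro < contra"
    by (simp_all add: sup_dom_def att_dom_def pro_def contra_def)
qed

lemma expl_lab_AClass_votes:
  fixes k numf D C F x y
  defines "pro \<equiv> card (active_rule_args F x (\<lambda>c. c = y))"
    and "contra \<equiv> card (active_rule_args F x (\<lambda>c. c \<noteq> y))"
  assumes "y \<in> C"
  shows "expl_lab k numf D C F x (AClass y) =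
    (if contra < pro then In else if pro < contra then Out else Und)"
  by (subst expl_lab_AClass) (simp add: dominance_AClass[OF assms(3)] pro_def contra_def)

locale random_forest =
  fixes k :: nat and numf :: "nat \<Rightarrow> bool" and D :: "nat \<Rightarrow> 'v::linorder set"
    and C :: "'c set" and F :: "('v, 'c) tree set"
  assumes categorical_finite: "\<And>i. i < k \<Longrightarrow> \<not> numf i \<Longrightarrow> finite (D i)"
    and finite_forest: "finite F"
    and forest_nonempty: "F \<noteq> {}"
    and trees: "\<And>T. T \<in> F \<Longrightarrow> is_tree k D T"
    and wf_lits: "\<And>T r l. T \<in> F \<Longrightarrow> r \<in> T \<Longrightarrow> l \<in> prem r \<Longrightarrow> wf_lit k numf l"
begin

abbreviation attacks where "attacks \<equiv> expl_att k numf D C F"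
abbreviation supports where "supports \<equiv> expl_sup C F"
abbreviation L where "L \<equiv> expl_lab k numf D C F"
abbreviation S where "S \<equiv> part_set numf D F"
abbreviation n where "n \<equiv> part_count numf D F"

lemma finite_thresholds_forest: "finite (thresholds F i)"
  using finite_forest trees by (intro finite_thresholds) (auto simp: is_tree_def)

lemma finite_active_rule_args: "finite (active_rule_args F x P)"
proof (rule finite_subset)
  show "active_rule_args F x P \<subseteq> (\<Union>T \<in> F. ARule T ` T)"
    by (auto simp: active_rule_args_def active_rule_def)
  show "finite (\<Union>T \<in> F. ARule T ` T)"
    using finite_forest trees by (auto simp: is_tree_def)
qed

lemma class_Out_if_other_In:
  assumes "y \<in> C" "y' \<in> C" "y' \<noteq> y" "L x (AClass y) = In"
  shows "L x (AClass y') = Out"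
proof -
  let ?votes = "\<lambda>z. card (active_rule_args F x (\<lambda>c. c = z))"
  let ?against = "\<lambda>z. card (active_rule_args F x (\<lambda>c. c \<noteq> z))"
  have "?votes z \<le> ?against z'" if "z \<noteq> z'" for z z'
    using that by (intro card_mono finite_active_rule_args) (auto simp: active_rule_args_def)
  then have "?votes y' \<le> ?against y" "?votes y \<le> ?against y'"
    using assms(3) by auto
  moreover have "?against y < ?votes y"
    using assms(1,4) by (auto simp: expl_lab_AClass_votes split: if_splits)
  ultimately have "?votes y' < ?against y'"
    by linarith
  then show ?thesis using assms(2) by (simp add: expl_lab_AClass_votes)
qed

context
  fixes x assumes input: "input_dom k D x"
begin

lemma ex1_part_set_input: "i < k \<Longrightarrow> \<exists>!j. j < n i \<and> x i \<in> S i j"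
  using categorical_finite finite_thresholds_forest input
  by (intro ex1_part_set) (auto simp: input_dom_def)

lemma ex_active_rule: "T \<in> F \<Longrightarrow> \<exists>r. active_rule T x r"
  using trees input by (force simp: is_tree_def active_rule_def)

lemma in_attacker_AFeat_iff:
  assumes "i < k" "j < n i"
  shows "(\<exists>B \<in> rel_of attacks (AFeat i j). L x B = In) \<longleftrightarrow> x i \<notin> S i j"
  using ex1_part_set_input[OF assms(1)] assms(2) by (auto simp: attackers_AFeat[OF assms])

lemma in_attacker_ARule_iff:
  assumes "T \<in> F" "r \<in> T"
  shows "(\<exists>B \<in> rel_of attacks (ARule T r). L x B = In) \<longleftrightarrow> \<not> active_rule T x r"
proof
  assume "\<exists>B \<in> rel_of attacks (ARule T r). L x B = In"
  then obtain i j l where "x i \<in> S i j" "l \<in> prem r" "lit_feat l = i" "\<forall>v \<in> S i j. \<not> lit_holds l v"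
    by (auto simp: attackers_ARule[OF assms] split: if_splits)
  then show "\<not> active_rule T x r"
    by (auto simp: active_rule_def sat_prem_def sat_lit_def)
next
  assume "\<not> active_rule T x r"
  then obtain l where l: "l \<in> prem r" "\<not> lit_holds l (x (lit_feat l))"
    using assms(2) by (auto simp: active_rule_def sat_prem_def sat_lit_def)
  define i where "i = lit_feat l"
  have wf: "wf_lit k numf l" using wf_lits assms l(1) .
  then have "i < k" by (simp add: wf_lit_def i_def)
  then obtain j where j: "j < n i" "x i \<in> S i j" using ex1_part_set_input by blast
  have "\<not> lit_holds l v" if "v \<in> S i j" for v
  proof -
    have "lit_holds l v \<longleftrightarrow> lit_holds l (x i)"
    proof (rule lit_holds_part_set_eq[OF wf i_def[symmetric] _ finite_thresholds_forest j(1) that j(2)])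
      show "w \<in> thresholds F i" if "lit_cond l = CLe i w" for w
        using assms l(1) that unfolding thresholds_def by blast
    qed
    then show ?thesis using l(2) i_def by simp
  qed
  then have "AFeat i j \<in> rel_of attacks (ARule T r)"
    using \<open>i < k\<close> j(1) l(1) i_def by (auto simp: attackers_ARule[OF assms])
  then show "\<exists>B \<in> rel_of attacks (ARule T r). L x B = In" using j(2) by force
qed

lemma bi_complete_at_AFeat:
  assumes "i < k" "j < n i"
  shows "bi_complete_at attacks supports (L x) (AFeat i j)"
  using in_attacker_AFeat_iff[OF assms]
  by (intro bi_complete_at_unsupported) (auto simp: supporters_AFeat attackers_AFeat[OF assms])

lemma bi_complete_at_ARule:
  assumes "T \<in> F" "r \<in> T"
  shows "bi_complete_at attacks supports (L x) (ARule T r)"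
proof (rule bi_complete_at_unsupported)
  have "rel_of attacks (ARule T r) \<subseteq> (\<lambda>(i, j). AFeat i j) ` (SIGMA i:{..<k}. {..<n i})"
    by (auto simp: attackers_ARule[OF assms])
  then show "finite (rel_of attacks (ARule T r))" by (rule finite_subset) auto
qed (use in_attacker_ARule_iff[OF assms] in \<open>auto simp: supporters_ARule attackers_ARule[OF assms] split: if_splits\<close>)

lemma bi_complete_at_AClass:
  assumes "y \<in> C"
  shows "bi_complete_at attacks supports (L x) (AClass y)"
proof (rule bi_complete_at_by_dominance[OF _ expl_lab_AClass])
  show "\<forall>B \<in> rel_of attacks (AClass y) \<union> rel_of supports (AClass y). L x B \<noteq> Und"
    by (auto simp: attackers_AClass[OF assms] supporters_AClass[OF assms] split: if_splits)
next
  assume no_in_attacker: "\<forall>B \<in> rel_of attacks (AClass y). L x B = Out"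
  then have "active_rule_args F x (\<lambda>c. c \<noteq> y) = {}"
    by (force simp: attackers_AClass[OF assms] active_rule_args_def active_rule_def)
  moreover obtain T r where "T \<in> F" "active_rule T x r"
    using forest_nonempty ex_active_rule by blast
  ultimately have "ARule T r \<in> active_rule_args F x (\<lambda>c. c = y)"
    unfolding active_rule_args_def by blast
  then have "card (active_rule_args F x (\<lambda>c. c \<noteq> y)) < card (active_rule_args F x (\<lambda>c. c = y))"
    using \<open>active_rule_args F x (\<lambda>c. c \<noteq> y) = {}\<close> finite_active_rule_args
    by (auto simp: card_gt_0_iff)
  then show "sup_dom attacks supports (L x) (AClass y)"
    using dominance_AClass[OF assms] by blast
qed

lemma bi_complete_expl_lab: "bi_complete (expl_bag k numf D C F) (L x)"
  unfolding expl_bag_def bi_complete_iff_bi_complete_at expl_args_def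
  using bi_complete_at_AFeat bi_complete_at_ARule bi_complete_at_AClass by blast

end

end

theorem lemma3:
  fixes k :: nat and numf :: "nat \<Rightarrow> bool" and D :: "nat \<Rightarrow> 'v::linorder set"
    and C :: "'c set" and F :: "('v, 'c) tree set"
  assumes cat_finite: "\<forall>i<k. \<not> numf i \<longrightarrow> finite (D i)"
    and C_finite: "finite C"
    and F_finite: "finite F"
    and F_nonempty: "F \<noteq> {}"
    and trees: "\<forall>T \<in> F. is_tree k D T"
    and rules_wf: "\<forall>T \<in> F. \<forall>r \<in> T. conc r \<in> C \<and> (\<forall>l \<in> prem r. wf_lit k numf l)"
  shows "\<forall>x. input_dom k D x \<longrightarrow>
           bi_complete (expl_bag k numf D C F) (expl_lab k numf D C F x) \<and>
           (\<forall>y \<in> C. \<forall>y' \<in> C. expl_lab k numf D C F x (AClass y) = In \<longrightarrow>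
                 expl_lab k numf D C F x (AClass y') = In \<longrightarrow> y = y') \<and>
           (\<forall>y \<in> C. expl_lab k numf D C F x (AClass y) = In \<longrightarrow>
                 (\<forall>y' \<in> C - {y}. expl_lab k numf D C F x (AClass y') = Out))"
proof -
  interpret random_forest k numf D C F
    using cat_finite F_finite F_nonempty trees rules_wf by unfold_locales auto
  have unique_In: "y = y'"
    if "y \<in> C" "y' \<in> C" "L x (AClass y) = In" "L x (AClass y') = In" for x y y'
    using class_Out_if_other_In[of y y' x] that by force
  show ?thesis
    using bi_complete_expl_lab class_Out_if_other_In unique_In by blast
qed

end
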